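(* For every integer $m\ge2$, \[ L_m:=\int\cdots\int_{W_m}\frac{dx_1\cdots dx_m}{x_1\cdots x_m}=m!\,\zeta(m)-(m-1)\ln^m2-m!\sum_{p=0}^{m-2}\frac{\ln^p2}{p!}\operatorname{Li}_{m-p}\!\left(\tfrac12\right). \]
   Context: $W_m:=\{(x_1,\dots,x_m)\in[0,1]^m : x_i+x_j\ge1 \text{ for all } 1\le i<j\le m\}$. The polylogarithm is $\operatorname{Li}_s(z):=\sum_{r=1}^\infty z^r/r^s$ for $|z|<1$; $\zeta$ is the Riemann zeta function. *)

theory Defs
  imports "HOL-Analysis.Analysis"
begin

text \<open>W_m, with coordinates indexed by 0..m-1 (points are functions in PiE).\<close>
definition W :: "nat \<Rightarrow> (nat \<Rightarrow> real) set" where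
  "W m = {x \<in> PiE {..<m} (\<lambda>_. {0..1}). \<forall>i<m. \<forall>j<m. i < j \<longrightarrow> x i + x j \<ge> 1}"

definition polylog :: "nat \<Rightarrow> real \<Rightarrow> real" where
  "polylog s z = (\<Sum>r. z ^ Suc r / real (Suc r) ^ s)"

definition zeta_nat :: "nat \<Rightarrow> real" where
  "zeta_nat s = (\<Sum>n. 1 / real (Suc n) ^ s)"

end

theory Submission
  imports Defs
begin

(*
  Geometric idea: at most one coordinate of a point of W_m is below 1/2.  So W_m is the disjoint
  union of the cube [1/2,1]^m and m "spikes"
      S_k = {x_k \<in> [0,1/2), x_j \<in> [1 - x_k, 1] for j \<noteq> k}.
  By Tonelli the cube contributes (ln 2)^m, and by Fubini each spike contributes
      X_{m-1},   X_n = \<integral>_0^{1/2} (-ln(1-t))^n / t dt.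
  Substituting t = 1 - e^-u and expanding 1/(1 - e^-u) geometrically,
      X_n = \<Sum>_{r\<ge>1} \<integral>_0^{ln 2} u^n e^{-r u} du = n! \<zeta>(n+1) - \<Sum>_{p\<le>n} n!/p! ln^p 2 Li_{n+1-p}(1/2),
  using the closed form of the truncated Gamma integral.  Finally Li_1(1/2) = ln 2 turns
  ln^m 2 + m X_{m-1} into the stated formula.
*)

lemma zeta_nat_sums:
  assumes "s \<ge> 2"
  shows "(\<lambda>k. 1 / real (Suc k) ^ s) sums zeta_nat s"
proof -
  have "summable (\<lambda>k. inverse (real k ^ s))" by (rule inverse_power_summable[OF assms])
  then have "summable (\<lambda>k. 1 / real (Suc k) ^ s)"
    by (subst (asm) summable_Suc_iff[symmetric]) (simp add: divide_inverse)
  then show ?thesis unfolding zeta_nat_def by (rule summable_sums)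
qed

lemma polylog_sums:
  fixes z :: real
  assumes "\<bar>z\<bar> < 1"
  shows "(\<lambda>k. z ^ Suc k / real (Suc k) ^ s) sums polylog s z"
proof -
  have "summable (\<lambda>k. z ^ Suc k / real (Suc k) ^ s)"
  proof (rule summable_comparison_test)
    have "norm (z ^ Suc k / real (Suc k) ^ s) \<le> \<bar>z\<bar> ^ Suc k" for k
    proof -
      have "\<bar>z\<bar> ^ Suc k * 1 \<le> \<bar>z\<bar> ^ Suc k * real (Suc k) ^ s"
        by (intro mult_left_mono) auto
      then show ?thesis
        by (simp add: power_abs abs_mult divide_le_eq)
    qed
    then show "\<exists>N. \<forall>k\<ge>N. norm (z ^ Suc k / real (Suc k) ^ s) \<le> \<bar>z\<bar> ^ Suc k"
      by blast
    show "summable (\<lambda>k. \<bar>z\<bar> ^ Suc k)"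
      using assms by (simp add: summable_geometric_iff)
  qed
  then show ?thesis unfolding polylog_def by (rule summable_sums)
qed

(* Li_1(z) = -ln(1-z); in particular Li_1(1/2) = ln 2, which produces the ln^m 2 term. *)
lemma polylog_1:
  fixes z :: real
  assumes "\<bar>z\<bar> < 1"
  shows "polylog 1 z = - ln (1 - z)"
proof -
  have "ln (1 - z) = (\<Sum>n. (-1) ^ n * (1 / real (n + 1)) * (1 - z - 1) ^ Suc n)"
    using assms by (intro ln_series) auto
  also have "\<dots> = (\<Sum>n. - (z ^ Suc n / real (Suc n) ^ 1))"
    by (intro suminf_cong) (simp add: power_minus' field_simps)
  also have "\<dots> = - polylog 1 z"
    using sums_minus[OF polylog_sums[OF assms, of 1]] by (simp add: sums_iff)
  finally show ?thesis by simp
qed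

lemma nn_integral_inverse_interval:
  fixes a :: real
  assumes "0 < a" "a \<le> 1"
  shows "(\<integral>\<^sup>+y. ennreal (1/y) * indicator {a..1} y \<partial>lborel) = ennreal (- ln a)"
proof -
  have "((\<lambda>y. 1/y) has_integral (ln 1 - ln a)) {a..1}"
    using assms
    by (intro fundamental_theorem_of_calculus)
       (auto intro!: derivative_eq_intros
             simp: has_real_derivative_iff_has_vector_derivative[symmetric] field_simps)
  from nn_integral_has_integral_lebesgue'[OF _ this] assms show ?thesis
    by simp
qed

(* For r > 0, -exp(-r u) * exp_moment_poly r n u is an antiderivative of u^n exp(-r u);
   the recursion is integration by parts. *)
fun exp_moment_poly :: "real \<Rightarrow> nat \<Rightarrow> real \<Rightarrow> real" where
  "exp_moment_poly r 0 u = 1/r"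
| "exp_moment_poly r (Suc n) u = u ^ Suc n / r + Suc n / r * exp_moment_poly r n u"

lemma exp_moment_poly_closed:
  assumes "r > 0"
  shows "exp_moment_poly r n u = (\<Sum>p\<le>n. fact n / fact p * u ^ p / r ^ (n + 1 - p))"
proof (induction n)
  case (Suc n)
  have "Suc n / r * (\<Sum>p\<le>n. fact n / fact p * u ^ p / r ^ (n + 1 - p))
      = (\<Sum>p\<le>n. fact (Suc n) / fact p * u ^ p / r ^ (Suc n + 1 - p))"
    unfolding sum_distrib_left
  proof (rule sum.cong[OF refl])
    fix p assume "p \<in> {..n}"
    then have "r ^ (Suc n + 1 - p) = r * r ^ (n + 1 - p)" by (simp add: Suc_diff_le)
    then show "Suc n / r * (fact n / fact p * u ^ p / r ^ (n + 1 - p))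
             = fact (Suc n) / fact p * u ^ p / r ^ (Suc n + 1 - p)"
      using assms by (simp add: field_simps)
  qed
  then show ?case using Suc by simp
qed simp

lemma exp_moment_poly_deriv:
  assumes "r > 0"
  shows "((\<lambda>u. - exp (-r*u) * exp_moment_poly r n u) has_real_derivative u ^ n * exp (-r*u)) (at u)"
proof (induction n)
  case 0
  show ?case using assms by (auto intro!: derivative_eq_intros simp: field_simps)
next
  case (Suc n)
  have by_parts: "(\<lambda>u. - exp (-r*u) * exp_moment_poly r (Suc n) u)
      = (\<lambda>u. - exp (-r*u) * u ^ Suc n / r + Suc n / r * (- exp (-r*u) * exp_moment_poly r n u))"
    by (auto simp: field_simps)
  have "((\<lambda>u. - exp (-r*u) * u ^ Suc n / r) has_real_derivative
          exp (-r*u) * u ^ Suc n - exp (-r*u) * Suc n * u ^ n / r) (at u)"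
    using assms by (auto intro!: derivative_eq_intros simp del: power_Suc simp: field_simps)
  from DERIV_add[OF this DERIV_cmult[OF Suc, of "Suc n / r"]]
  show ?case unfolding by_parts using assms by (simp add: field_simps)
qed

(* exp_moment r n b = \<integral>_0^b u^n exp(-r u) du, the truncated Gamma integral. *)
definition exp_moment :: "real \<Rightarrow> nat \<Rightarrow> real \<Rightarrow> real" where
  "exp_moment r n b = fact n / r ^ (n+1) - exp (-r*b) * exp_moment_poly r n b"

lemma exp_moment_has_integral:
  assumes "r > 0" "b \<ge> 0"
  shows "((\<lambda>u. u ^ n * exp (-r*u)) has_integral exp_moment r n b) {0..b}"
proof -
  have "((\<lambda>u. u ^ n * exp (-r*u)) has_integral
           (- exp (-r*b) * exp_moment_poly r n b) - (- exp (-r*0) * exp_moment_poly r n 0)) {0..b}"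
    using assms exp_moment_poly_deriv[OF assms(1)]
    by (intro fundamental_theorem_of_calculus)
       (auto simp: has_real_derivative_iff_has_vector_derivative[symmetric]
             intro: has_field_derivative_at_within)
  then show ?thesis using assms by (simp add: exp_moment_def exp_moment_poly_closed)
qed

(* Needed to pass from real series to sums in the extended nonnegative reals. *)
lemma exp_moment_nonneg: "r > 0 \<Longrightarrow> b \<ge> 0 \<Longrightarrow> exp_moment r n b \<ge> 0"
  by (rule has_integral_nonneg[OF exp_moment_has_integral]) auto

(* log_moment n is the value of X_n = \<integral>_0^{1/2} (-ln(1-t))^n / t dt, which is the
   contribution of each spike region (with n = m - 1). *)
definition log_moment :: "nat \<Rightarrow> real" where
  "log_moment n = fact n * zeta_nat (n+1)
     - (\<Sum>p\<le>n. fact n / fact p * ln 2 ^ p * polylog (n+1-p) (1/2))"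

(* At b = ln 2 the factor exp(-k b) becomes 2^-k, exposing the polylog terms. *)
lemma exp_moment_ln2:
  "exp_moment (Suc k) n (ln 2) = fact n * (1 / real (Suc k) ^ (n+1))
     - (\<Sum>p\<le>n. fact n / fact p * ln 2 ^ p * ((1/2) ^ Suc k / real (Suc k) ^ (n+1-p)))"
proof -
  have two_pow: "exp (real (Suc k) * ln 2) = 2 ^ Suc k"
    by (simp only: exp_of_nat_mult) simp
  have "exp (- real (Suc k) * ln 2) = inverse (exp (real (Suc k) * ln 2))"
    by (simp add: exp_minus[symmetric] algebra_simps)
  also have "\<dots> = (1/2) ^ Suc k"
    by (simp only: two_pow) (simp add: power_one_over inverse_eq_divide)
  finally have "exp (- real (Suc k) * ln 2) = (1/2) ^ Suc k" .
  then show ?thesis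
    unfolding exp_moment_def exp_moment_poly_closed[OF of_nat_0_less_iff[THEN iffD2, OF zero_less_Suc]]
      sum_distrib_left
    by (intro arg_cong2[where f=minus] sum.cong) (simp_all add: field_simps)
qed

lemma log_moment_sums:
  assumes "n \<ge> 1"
  shows "(\<lambda>k. exp_moment (Suc k) n (ln 2)) sums log_moment n"
proof -
  have "(\<lambda>k. fact n * (1 / real (Suc k) ^ (n+1))) sums (fact n * zeta_nat (n+1))"
    using assms by (intro sums_mult zeta_nat_sums) simp
  moreover have "(\<lambda>k. \<Sum>p\<le>n. fact n / fact p * ln 2 ^ p * ((1/2) ^ Suc k / real (Suc k) ^ (n+1-p)))
      sums (\<Sum>p\<le>n. fact n / fact p * ln 2 ^ p * polylog (n+1-p) (1/2))"
    by (intro sums_sum sums_mult polylog_sums) simp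
  ultimately show ?thesis
    unfolding exp_moment_ln2 log_moment_def by (rule sums_diff)
qed

lemma log_moment_nonneg: "n \<ge> 1 \<Longrightarrow> 0 \<le> log_moment n"
  by (rule sums_le[OF _ sums_zero log_moment_sums]) (auto intro: exp_moment_nonneg)

lemma exp_geometric_sums:
  fixes u :: real
  assumes "u > 0"
  shows "(\<lambda>k. exp (- real (Suc k) * u)) sums (exp (-u) / (1 - exp (-u)))"
proof -
  have "(\<lambda>k. exp (-u) ^ k) sums (1 / (1 - exp (-u)))"
    using assms by (intro geometric_sums) simp
  from sums_mult[OF this, of "exp (-u)"] show ?thesis
    by (simp add: exp_of_nat_mult[symmetric] exp_add[symmetric] algebra_simps)
qed

lemma log_moment_substitution:
  "(\<integral>\<^sup>+t. ennreal ((- ln (1-t)) ^ n / t) * indicator {0..1/2} t \<partial>lborel)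
   = (\<integral>\<^sup>+u. ennreal (u ^ n * (exp (-u) / (1 - exp (-u)))) * indicator {0..ln 2} u \<partial>lborel)"
proof -
  define f where "f t = (- ln (1-t)) ^ n / t" for t :: real
  define g where "g u = 1 - exp (-u)" for u :: real
  have g_ends: "g 0 = 0" "g (ln 2) = 1/2"
    by (auto simp: g_def exp_minus)
  have "(\<integral>\<^sup>+t. ennreal ((- ln (1-t)) ^ n / t) * indicator {0..1/2} t \<partial>lborel)
      = (\<integral>\<^sup>+t. f t * indicator {g 0..g (ln 2)} t \<partial>lborel)"
    unfolding g_ends by (intro nn_integral_cong) (simp add: f_def indicator_def)
  also have "\<dots> = (\<integral>\<^sup>+u. f (g u) * exp (-u) * indicator {0..ln 2} u \<partial>lborel)"
    unfolding g_def
    by (rule nn_integral_substitution)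
       (unfold set_borel_measurable_def f_def, measurable,
        auto intro!: derivative_eq_intros continuous_intros)
  also have "\<dots> = (\<integral>\<^sup>+u. ennreal (u ^ n * (exp (-u) / (1 - exp (-u)))) * indicator {0..ln 2} u \<partial>lborel)"
    by (intro nn_integral_cong) (simp add: f_def g_def indicator_def)
  finally show ?thesis .
qed

(* X_n = log_moment n: expand the integrand geometrically and integrate term by term
   (monotone convergence). *)
lemma log_moment_integral:
  assumes "n \<ge> 1"
  shows "(\<integral>\<^sup>+t. ennreal ((- ln (1-t)) ^ n / t) * indicator {0..1/2} t \<partial>lborel)
       = ennreal (log_moment n)"
proof -
  have expand: "ennreal (u ^ n * (exp (-u) / (1 - exp (-u)))) * indicator {0..ln 2} u
      = (\<Sum>k. ennreal (u ^ n * exp (- real (Suc k) * u)) * indicator {0..ln 2} u)" for u :: real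
  proof (cases "0 < u \<and> u \<le> ln 2")
    case True
    have "(\<lambda>k. u ^ n * exp (- real (Suc k) * u)) sums (u ^ n * (exp (-u) / (1 - exp (-u))))"
      using True by (intro sums_mult exp_geometric_sums) simp
    then have "(\<Sum>k. ennreal (u ^ n * exp (- real (Suc k) * u))) = ennreal (u ^ n * (exp (-u) / (1 - exp (-u))))"
      using True by (intro suminf_ennreal_eq) auto
    then show ?thesis
      using True by simp
  next
    case False
    then consider "u = 0" | "u \<notin> {0..ln 2}" by fastforce
    then show ?thesis
      by cases (use assms in \<open>auto simp: zero_power\<close>)
  qed
  have "(\<integral>\<^sup>+t. ennreal ((- ln (1-t)) ^ n / t) * indicator {0..1/2} t \<partial>lborel)
      = (\<integral>\<^sup>+u. (\<Sum>k. ennreal (u ^ n * exp (- real (Suc k) * u)) * indicator {0..ln 2} u) \<partial>lborel)"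
    unfolding log_moment_substitution expand ..
  also have "\<dots> = (\<Sum>k. \<integral>\<^sup>+u. ennreal (u ^ n * exp (- real (Suc k) * u)) * indicator {0..ln 2} u \<partial>lborel)"
    by (rule nn_integral_suminf) measurable
  also have "\<dots> = (\<Sum>k. ennreal (exp_moment (Suc k) n (ln 2)))"
    by (intro suminf_cong nn_integral_has_integral_lebesgue' exp_moment_has_integral) auto
  also have "\<dots> = ennreal (log_moment n)"
    using assms by (intro suminf_ennreal_eq log_moment_sums exp_moment_nonneg) auto
  finally show ?thesis .
qed

definition recip_on :: "real set \<Rightarrow> real \<Rightarrow> ennreal" where
  "recip_on A y = ennreal (1/y) * indicator A y"

lemma recip_on_measurable[measurable]:
  assumes [measurable]: "g \<in> borel_measurable M" "a \<in> borel_measurable M" "b \<in> borel_measurable M"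
  shows "(\<lambda>x. recip_on {a x..b x} (g x)) \<in> borel_measurable M"
  unfolding recip_on_def indicator_def atLeastAtMost_iff by measurable

lemma recip_on_const_measurable[measurable]:
  assumes [measurable]: "A \<in> sets borel" "g \<in> borel_measurable M"
  shows "(\<lambda>x. recip_on A (g x)) \<in> borel_measurable M"
  unfolding recip_on_def by measurable

definition upper_cube :: "nat \<Rightarrow> (nat \<Rightarrow> real) set" where
  "upper_cube m = {x. \<forall>i\<in>{..<m}. x i \<in> {1/2..1}}"

definition spike :: "nat \<Rightarrow> nat \<Rightarrow> (nat \<Rightarrow> real) set" where
  "spike m k = {x. x k \<in> {0..<1/2} \<and> (\<forall>j\<in>{..<m}-{k}. x j \<in> {1 - x k..1})}"

lemma W_sym:
  assumes "x \<in> W m" "i < m" "j < m" "i \<noteq> j"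
  shows "1 \<le> x i + x j"
proof (cases "i < j")
  case True
  then show ?thesis using assms unfolding W_def by blast
next
  case False
  then have "j < i" using assms(4) by simp
  then have "1 \<le> x j + x i" using assms unfolding W_def by blast
  then show ?thesis by simp
qed

lemma W_decomposition:
  assumes "x \<in> extensional {..<m}"
  shows "x \<in> W m \<longleftrightarrow> x \<in> upper_cube m \<or> (\<exists>k<m. x \<in> spike m k)"
proof
  assume xW: "x \<in> W m"
  then have unit: "x i \<in> {0..1}" if "i < m" for i
    using that unfolding W_def by (auto simp: PiE_iff)
  show "x \<in> upper_cube m \<or> (\<exists>k<m. x \<in> spike m k)"
  proof (cases "x \<in> upper_cube m")
    case False
    then obtain k where "k < m" "x k \<notin> {1/2..1}"
      by (auto simp: upper_cube_def)
    with unit have k: "k < m" "x k \<in> {0..<1/2}"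
      by auto
    have "x j \<in> {1 - x k..1}" if "j < m" "j \<noteq> k" for j
      using W_sym[OF xW that(1) k(1) that(2)] unit[OF that(1)] by auto
    then have "x \<in> spike m k"
      using k by (auto simp: spike_def)
    with k show ?thesis by blast
  qed simp
next
  assume "x \<in> upper_cube m \<or> (\<exists>k<m. x \<in> spike m k)"
  then consider "x \<in> upper_cube m" | k where "k < m" "x \<in> spike m k" by blast
  then show "x \<in> W m"
  proof cases
    case 1
    then have half: "x i \<in> {1/2..1}" if "i < m" for i
      using that by (auto simp: upper_cube_def)
    have "x i \<in> {0..1}" if "i < m" for i
      using half[OF that] by simp
    moreover have "1 \<le> x i + x j" if "i < m" "j < m" for i j
      using half[OF that(1)] half[OF that(2)] by simp
    ultimately show ?thesis
      using assms by (auto simp: W_def PiE_iff)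
  next
    case 2
    then have "x k \<in> {0..<1/2}" and others: "\<And>j. j < m \<Longrightarrow> j \<noteq> k \<Longrightarrow> x j \<in> {1 - x k..1}"
      by (auto simp: spike_def)
    then have "x i \<in> {0..1}" if "i < m" for i
      using that by (cases "i = k") fastforce+
    moreover have "1 \<le> x i + x j" if "i < m" "j < m" "i \<noteq> j" for i j
      using that \<open>x k \<in> {0..<1/2}\<close> others[of i] others[of j] by (cases "i = k \<or> j = k") auto
    ultimately show ?thesis
      using assms by (auto simp: W_def PiE_iff)
  qed
qed

(* A point lies in at most one spike: two coordinates below 1/2 would violate x_i + x_j \<ge> 1. *)
lemma spike_unique:
  assumes "x \<in> spike m k" "x \<in> spike m k'" "k' < m"
  shows "k = k'"
proof (rule ccontr)
  assume "k \<noteq> k'"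
  then have "1 - x k \<le> x k'" using assms(1,3) by (auto simp: spike_def)
  moreover have "x k < 1/2" "x k' < 1/2" using assms(1,2) by (auto simp: spike_def)
  ultimately show False by linarith
qed

lemma indicator_W:
  assumes "x \<in> extensional {..<m}"
  shows "(indicator (W m) x :: 'a :: {comm_monoid_add, zero_neq_one})
       = indicator (upper_cube m) x + (\<Sum>k<m. indicator (spike m k) x)"
proof (cases "\<exists>k<m. x \<in> spike m k")
  case True
  then obtain k where k: "k < m" "x \<in> spike m k" by blast
  then have "x k < 1/2" by (simp add: spike_def)
  have "x \<notin> upper_cube m"
  proof
    assume "x \<in> upper_cube m"
    then have "1/2 \<le> x k" using k(1) by (simp add: upper_cube_def)
    with \<open>x k < 1/2\<close> show False by simp
  qed
  moreover have "(\<Sum>k'<m. indicator (spike m k') x :: 'a) = (\<Sum>k'<m. if k' = k then 1 else 0)"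
  proof (intro sum.cong refl)
    fix k' assume "k' \<in> {..<m}"
    then have "x \<in> spike m k' \<longleftrightarrow> k' = k"
      using spike_unique[OF k(2), of k'] k(2) by blast
    then show "indicator (spike m k') x = (if k' = k then 1 else 0 :: 'a)"
      by (simp add: indicator_def)
  qed
  moreover have "x \<in> W m"
    using k W_decomposition[OF assms] by blast
  ultimately show ?thesis
    using k by simp
next
  case False
  then show ?thesis
    using W_decomposition[OF assms] by (simp add: indicator_def)
qed

lemma prod_indicator:
  assumes "finite I"
  shows "(\<Prod>i\<in>I. indicator (A i) (x i) :: 'a :: comm_semiring_1)
       = indicator {x. \<forall>i\<in>I. x i \<in> A i} x"
proof (cases "\<forall>i\<in>I. x i \<in> A i")
  case False
  then obtain i where i: "i \<in> I" "x i \<notin> A i" by blast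
  then have "(\<Prod>i\<in>I. indicator (A i) (x i) :: 'a) = 0"
    using assms by (intro prod_zero bexI[of _ i]) auto
  with False show ?thesis by simp
qed simp

lemma prod_recip_on:
  assumes "finite I"
  shows "(\<Prod>i\<in>I. recip_on (A i) (x i))
       = (\<Prod>i\<in>I. ennreal (1 / x i)) * indicator {x. \<forall>i\<in>I. x i \<in> A i} x"
  unfolding recip_on_def prod.distrib prod_indicator[OF assms] ..

lemma integrand_decomposition:
  assumes "x \<in> extensional {..<m}"
  shows "ennreal (1 / (\<Prod>i<m. x i)) * indicator (W m) x
       = (\<Prod>i<m. recip_on {1/2..1} (x i))
         + (\<Sum>k<m. recip_on {0..<1/2} (x k) * (\<Prod>j\<in>{..<m}-{k}. recip_on {1 - x k..1} (x j)))"
proof -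
  let ?R = "\<Prod>i<m. ennreal (1 / x i)"
  have lhs: "ennreal (1 / (\<Prod>i<m. x i)) * indicator (W m) x = ?R * indicator (W m) x"
  proof (cases "x \<in> W m")
    case True
    then have "0 \<le> 1 / x i" if "i < m" for i
      using that by (auto simp: W_def PiE_iff)
    then have "?R = ennreal (\<Prod>i<m. 1 / x i)"
      by (intro prod_ennreal) simp
    then show ?thesis
      by (simp add: prod_dividef)
  qed simp
  have cube: "(\<Prod>i<m. recip_on {1/2..1} (x i)) = ?R * indicator (upper_cube m) x"
    by (simp add: prod_recip_on upper_cube_def)
  have arm: "recip_on {0..<1/2} (x k) * (\<Prod>j\<in>{..<m}-{k}. recip_on {1 - x k..1} (x j))
           = ?R * indicator (spike m k) x" if "k < m" for k
  proof -
    define A where "A i = (if i = k then {0..<1/2} else {1 - x k..1})" for i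
    have "(\<Prod>i<m. recip_on (A i) (x i)) = recip_on (A k) (x k) * (\<Prod>i\<in>{..<m}-{k}. recip_on (A i) (x i))"
      by (rule prod.remove) (use that in auto)
    also have "\<dots> = recip_on {0..<1/2} (x k) * (\<Prod>j\<in>{..<m}-{k}. recip_on {1 - x k..1} (x j))"
      by (auto simp: A_def intro!: prod.cong)
    finally have "recip_on {0..<1/2} (x k) * (\<Prod>j\<in>{..<m}-{k}. recip_on {1 - x k..1} (x j))
        = ?R * indicator {y. \<forall>i\<in>{..<m}. y i \<in> A i} x"
      by (simp add: prod_recip_on)
    also have "indicator {y. \<forall>i\<in>{..<m}. y i \<in> A i} x = (indicator (spike m k) x :: ennreal)"
      using that by (auto simp: indicator_def spike_def A_def)
    finally show ?thesis .
  qed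
  have "ennreal (1 / (\<Prod>i<m. x i)) * indicator (W m) x
      = ?R * indicator (upper_cube m) x + (\<Sum>k<m. ?R * indicator (spike m k) x)"
    unfolding lhs unfolding indicator_W[OF assms] distrib_left sum_distrib_left ..
  also have "\<dots> = (\<Prod>i<m. recip_on {1/2..1} (x i))
         + (\<Sum>k<m. recip_on {0..<1/2} (x k) * (\<Prod>j\<in>{..<m}-{k}. recip_on {1 - x k..1} (x j)))"
    unfolding cube
  proof (intro arg_cong2[where f="(+)"] refl sum.cong)
    fix k assume "k \<in> {..<m}"
    then show "?R * indicator (spike m k) x
        = recip_on {0..<1/2} (x k) * (\<Prod>j\<in>{..<m}-{k}. recip_on {1 - x k..1} (x j))"
      by (intro arm[symmetric]) simp
  qed
  finally show ?thesis .
qed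

lemma nn_integral_PiM_prod_power:
  fixes f :: "'b::euclidean_space \<Rightarrow> ennreal"
  assumes "finite I" "f \<in> borel_measurable borel"
  shows "(\<integral>\<^sup>+x. (\<Prod>i\<in>I. f (x i)) \<partial>PiM I (\<lambda>_. lborel)) = (\<integral>\<^sup>+y. f y \<partial>lborel) ^ card I"
proof -
  interpret product_sigma_finite "\<lambda>_::'a. lborel :: 'b measure" by standard
  show ?thesis
    using assms by (subst product_nn_integral_prod[of I "\<lambda>_. f"]) auto
qed

lemma nn_integral_PiM_spike:
  fixes f :: "'b::euclidean_space \<Rightarrow> ennreal" and g :: "'b \<Rightarrow> 'b \<Rightarrow> ennreal"
  assumes "finite I" "k \<in> I"
    and [measurable]: "f \<in> borel_measurable borel" "case_prod g \<in> borel_measurable (borel \<Otimes>\<^sub>M borel)"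
  shows "(\<integral>\<^sup>+x. f (x k) * (\<Prod>j\<in>I-{k}. g (x k) (x j)) \<partial>PiM I (\<lambda>_. lborel))
       = (\<integral>\<^sup>+y. f y * (\<integral>\<^sup>+z. g y z \<partial>lborel) ^ (card I - 1) \<partial>lborel)"
proof -
  interpret P: product_sigma_finite "\<lambda>_::'a. lborel :: 'b measure" by standard
  have I: "I = insert k (I - {k})" and fin: "finite (I - {k})"
    using assms by auto
  have "(\<integral>\<^sup>+x. f (x k) * (\<Prod>j\<in>I-{k}. g (x k) (x j)) \<partial>PiM I (\<lambda>_. lborel))
      = (\<integral>\<^sup>+y. (\<integral>\<^sup>+x. f ((x(k:=y)) k) * (\<Prod>j\<in>I-{k}. g ((x(k:=y)) k) ((x(k:=y)) j))
            \<partial>PiM (I-{k}) (\<lambda>_. lborel)) \<partial>lborel)"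
    by (subst I, rule P.product_nn_integral_insert_rev) (use fin in \<open>auto, measurable\<close>)
  also have "\<dots> = (\<integral>\<^sup>+y. f y * (\<integral>\<^sup>+x. (\<Prod>j\<in>I-{k}. g y (x j)) \<partial>PiM (I-{k}) (\<lambda>_. lborel)) \<partial>lborel)"
    by (intro nn_integral_cong, subst nn_integral_cmult[symmetric]) (auto intro!: nn_integral_cong)
  also have "\<dots> = (\<integral>\<^sup>+y. f y * (\<integral>\<^sup>+z. g y z \<partial>lborel) ^ (card I - 1) \<partial>lborel)"
    using assms by (simp add: nn_integral_PiM_prod_power[OF fin])
  finally show ?thesis .
qed

lemma upper_cube_integral:
  "(\<integral>\<^sup>+x. (\<Prod>i\<in>I. recip_on {1/2..1} (x i)) \<partial>PiM I (\<lambda>_. lborel)) = ennreal (ln 2 ^ card I)"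
  if "finite I"
proof -
  have "(\<integral>\<^sup>+y. recip_on {1/2..1} y \<partial>lborel) = ennreal (ln 2)"
    using nn_integral_inverse_interval[of "1/2"] by (simp add: recip_on_def ln_div)
  then show ?thesis
    using that by (simp add: nn_integral_PiM_prod_power ennreal_power)
qed

(* Each spike contributes \<integral>_0^{1/2} (-ln(1-y))^n / y dy = log_moment n, where n + 1 is the
   dimension; the point y = 1/2 is a null set. *)
lemma spike_integral:
  assumes "finite I" "k \<in> I" "card I = Suc n" "n \<ge> 1"
  shows "(\<integral>\<^sup>+x. recip_on {0..<1/2} (x k) * (\<Prod>j\<in>I-{k}. recip_on {1 - x k..1} (x j))
            \<partial>PiM I (\<lambda>_. lborel)) = ennreal (log_moment n)"
proof -
  have "(\<lambda>(y, z). recip_on {1 - y..1} z) \<in> borel_measurable (borel \<Otimes>\<^sub>M borel)"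
    by measurable
  then have "(\<integral>\<^sup>+x. recip_on {0..<1/2} (x k) * (\<Prod>j\<in>I-{k}. recip_on {1 - x k..1} (x j))
            \<partial>PiM I (\<lambda>_. lborel))
      = (\<integral>\<^sup>+y. recip_on {0..<1/2} y * (\<integral>\<^sup>+z. recip_on {1 - y..1} z \<partial>lborel) ^ n \<partial>lborel)"
    using assms by (subst nn_integral_PiM_spike) auto
  also have "\<dots> = (\<integral>\<^sup>+t. ennreal ((- ln (1-t)) ^ n / t) * indicator {0..1/2} t \<partial>lborel)"
  proof (rule nn_integral_cong_AE)
    show "AE y in lborel. recip_on {0..<1/2} y * (\<integral>\<^sup>+z. recip_on {1 - y..1} z \<partial>lborel) ^ n
                        = ennreal ((- ln (1-y)) ^ n / y) * indicator {0..1/2} y"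
      using AE_lborel_singleton[of "1/2::real"]
    proof eventually_elim
      case (elim y)
      show ?case
      proof (cases "0 \<le> y \<and> y < 1/2")
        case True
        let ?L = "- ln (1-y)"
        have L: "0 \<le> ?L"
          using True by auto
        have "(\<integral>\<^sup>+z. recip_on {1 - y..1} z \<partial>lborel) = ennreal ?L"
          unfolding recip_on_def by (intro nn_integral_inverse_interval) (use True in auto)
        then have "recip_on {0..<1/2} y * (\<integral>\<^sup>+z. recip_on {1 - y..1} z \<partial>lborel) ^ n
            = ennreal (1/y) * ennreal (?L ^ n)"
          using True L by (simp add: recip_on_def ennreal_power)
        also have "\<dots> = ennreal (?L ^ n / y)"
          using True L by (simp add: ennreal_mult[symmetric] field_simps)
        finally show ?thesis
          using True by simp
      next
        case False
        with elim have "recip_on {0..<1/2} y = 0" "indicator {0..1/2} y = (0::ennreal)"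
          by (auto simp: recip_on_def)
        then show ?thesis
          by simp
      qed
    qed
  qed
  also have "\<dots> = ennreal (log_moment n)"
    by (rule log_moment_integral[OF assms(4)])
  finally show ?thesis .
qed

(* ln^m 2 + m X_{m-1} equals the claimed closed form: the p = m-1 term of log_moment
   involves Li_1(1/2) = ln 2 and combines with ln^m 2. *)
lemma closed_form_arithmetic:
  assumes "m \<ge> 2"
  shows "ln 2 ^ m + real m * log_moment (m - 1)
       = fact m * zeta_nat m - real (m - 1) * ln 2 ^ m
         - fact m * (\<Sum>p=0..m-2. ln 2 ^ p / fact p * polylog (m - p) (1/2))"
proof -
  obtain q where m: "m = Suc (Suc q)"
    using assms by (metis add_2_eq_Suc le_Suc_ex)
  have last: "(\<Sum>p\<le>Suc q. fact (Suc q) / fact p * ln 2 ^ p * polylog (Suc q + 1 - p) (1/2))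
      = (\<Sum>p\<le>q. fact (Suc q) / fact p * ln 2 ^ p * polylog (Suc q + 1 - p) (1/2)) + ln 2 ^ Suc (Suc q)"
    using polylog_1[of "1/2"] by (simp add: ln_div)
  have rest: "real m * (\<Sum>p\<le>q. fact (Suc q) / fact p * ln 2 ^ p * polylog (Suc q + 1 - p) (1/2))
      = fact m * (\<Sum>p=0..m-2. ln 2 ^ p / fact p * polylog (m - p) (1/2))"
    unfolding sum_distrib_left using m
    by (auto simp: atLeast0AtMost intro!: sum.cong)
  have pred: "m - 1 = Suc q" and fact_m: "real m * fact (Suc q) = fact m"
    using m by simp_all
  show ?thesis
    unfolding pred log_moment_def last right_diff_distrib distrib_left rest[symmetric]
    using m fact_m by (simp add: algebra_simps)
qed

theorem theorem7:
  fixes m :: nat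
  assumes "m \<ge> 2"
  shows "(\<integral>\<^sup>+ x \<in> W m. ennreal (1 / (\<Prod>i<m. x i)) \<partial>(PiM {..<m} (\<lambda>_. lborel)))
    = ennreal (fact m * zeta_nat m - real (m - 1) * ln 2 ^ m
        - fact m * (\<Sum>p=0..m-2. ln 2 ^ p / fact p * polylog (m - p) (1/2)))"
proof -
  let ?M = "PiM {..<m} (\<lambda>_. lborel :: real measure)"
  let ?cube = "\<lambda>x. \<Prod>i<m. recip_on {1/2..1} (x i)"
  let ?spike = "\<lambda>k x. recip_on {0..<1/2} (x k) * (\<Prod>j\<in>{..<m}-{k}. recip_on {1 - x k..1} (x j))"
  have "(\<integral>\<^sup>+ x \<in> W m. ennreal (1 / (\<Prod>i<m. x i)) \<partial>?M) = (\<integral>\<^sup>+ x. ?cube x + (\<Sum>k<m. ?spike k x) \<partial>?M)"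
    by (intro nn_integral_cong integrand_decomposition) (auto simp: space_PiM PiE_iff)
  also have "\<dots> = (\<integral>\<^sup>+ x. ?cube x \<partial>?M) + (\<Sum>k<m. \<integral>\<^sup>+ x. ?spike k x \<partial>?M)"
    by (subst nn_integral_add, measurable, subst nn_integral_sum, measurable)
  also have "\<dots> = ennreal (ln 2 ^ m) + (\<Sum>k<m. ennreal (log_moment (m - 1)))"
    using assms by (intro arg_cong2[where f="(+)"] sum.cong refl spike_integral)
      (auto simp: upper_cube_integral)
  also have "\<dots> = ennreal (ln 2 ^ m + real m * log_moment (m - 1))"
    using assms log_moment_nonneg[of "m - 1"]
    by (simp add: ennreal_plus ennreal_mult ennreal_of_nat_eq_real_of_nat)
  finally show ?thesis
    unfolding closed_form_arithmetic[OF assms] .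
qed

end
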